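(* Consider Algorithm 7 (described in the context) modified so that the query noise is $\nu_i=\mathrm{Lap}(c\Delta/\epsilon_2)$ instead of $\mathrm{Lap}(2c\Delta/\epsilon_2)$. If the query sequence is monotonic, then for all $\epsilon_1>0,\epsilon_2>0,\epsilon_3\ge0$, $\Delta>0$, integer $c\ge1$ and thresholds, this modified algorithm satisfies $(\epsilon_1+\epsilon_2+\epsilon_3)$-differential privacy: for all neighboring $D\simeq D'$ and every measurable set $S$ of outputs, $\Pr[\mathcal{A}(D)\in S]\le e^{\epsilon_1+\epsilon_2+\epsilon_3}\Pr[\mathcal{A}(D')\in S]$.
   Context: Two datasets are neighboring ($D\simeq D'$) if they differ in one tuple. A query $q$ has sensitivity at most $\Delta$ if $|q(D)-q(D')|\le\Delta$ for all $D\simeq D'$. A finite sequence of queries $q_1,\dots,q_n$ (each of sensitivity at most $\Delta$) is monotonic if for every pair of neighboring datasets $D\simeq D'$, either $q_i(D)\ge q_i(D')$ for all $i$, or $q_i(D)\le q_i(D')$ for all $i$. $\mathrm{Lap}(\beta)$ denotes a random variable with density $\frac{1}{2\beta}e^{-|x|/\beta}$; all noise variables are independent. Algorithm 7 (standard SVT): Input: dataset $D$, queries $q_1,q_2,\dots$, thresholds $T_1,T_2,\dots$, cutoff $c$, parameters $\epsilon_1,\epsilon_2,\epsilon_3$. Sample $\rho=\mathrm{Lap}(\Delta/\epsilon_1)$ once, set count $=0$. For each query $q_i$: sample $\nu_i=\mathrm{Lap}(2c\Delta/\epsilon_2)$; if $q_i(D)+\nu_i\ge T_i+\rho$, then output $a_i=q_i(D)+\mathrm{Lap}(c\Delta/\epsilon_3)$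 (fresh noise) if $\epsilon_3>0$, or $a_i=\top$ if $\epsilon_3=0$; increment count and abort if count $\ge c$. Otherwise output $a_i=\bot$. *)

theory Defs
  imports "HOL-Probability.Probability" "HOL-Library.Multiset"
begin

text \<open>Datasets are finite multisets of tuples. Two datasets are neighbouring if they
differ in one tuple: one is obtained from the other by adding, removing, or
replacing a single tuple.\<close>
definition neighbors :: "'a multiset \<Rightarrow> 'a multiset \<Rightarrow> bool" where
  "neighbors D D' \<longleftrightarrow> D \<noteq> D' \<and> size (D - D') \<le> 1 \<and> size (D' - D) \<le> 1"

definition sensitivity_le :: "('a multiset \<Rightarrow> real) \<Rightarrow> real \<Rightarrow> bool" where
  "sensitivity_le f \<Delta> \<longleftrightarrow> (\<forall>D D'. neighbors D D' \<longrightarrow> \<bar>f D - f D'\<bar> \<le> \<Delta>)"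

definition monotonic_queries :: "nat \<Rightarrow> (nat \<Rightarrow> 'a multiset \<Rightarrow> real) \<Rightarrow> bool" where
  "monotonic_queries n q \<longleftrightarrow> (\<forall>D D'. neighbors D D' \<longrightarrow>
      (\<forall>i<n. q i D \<ge> q i D') \<or> (\<forall>i<n. q i D \<le> q i D'))"

definition lap_density :: "real \<Rightarrow> real \<Rightarrow> real" where
  "lap_density b x = exp (- \<bar>x\<bar> / b) / (2 * b)"

definition Lap :: "real \<Rightarrow> real measure" where
  "Lap b = density lborel (\<lambda>x. ennreal (lap_density b x))"

text \<open>When \<open>\<epsilon>3 = 0\<close> the answer noises are never used; they are then
drawn from \<open>Lap 1\<close> merely to keep the noise space a probability space.\<close>
definition svt_noise :: "nat \<Rightarrow> nat \<Rightarrow> real \<Rightarrow> real \<Rightarrow> real \<Rightarrow> real \<Rightarrow>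
    (real \<times> (nat \<Rightarrow> real) \<times> (nat \<Rightarrow> real)) measure" where
  "svt_noise n c \<Delta> \<epsilon>1 \<epsilon>2 \<epsilon>3 =
     Lap (\<Delta> / \<epsilon>1) \<Otimes>\<^sub>M
     ((\<Pi>\<^sub>M i\<in>{..<n}. Lap (real c * \<Delta> / \<epsilon>2)) \<Otimes>\<^sub>M
      (\<Pi>\<^sub>M i\<in>{..<n}. Lap (if \<epsilon>3 > 0 then real c * \<Delta> / \<epsilon>3 else 1)))"

text \<open>Encoding of a single output slot as a pair (tag, value):
  tag 0 = \<open>\<bottom>\<close>; tag 1 = positive answer (value = noisy answer if \<open>\<epsilon>3 > 0\<close>,
  and value 0 standing for \<open>\<top>\<close> if \<open>\<epsilon>3 = 0\<close>); tag 2 = slot not reached because the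
  algorithm aborted earlier. An output of the algorithm is the function \<open>i \<mapsto> slot i\<close>
  on \<open>{..<n}\<close>, which determines the output list and vice versa.\<close>
definition svt_slot_space :: "(nat \<times> real) measure" where
  "svt_slot_space = count_space UNIV \<Otimes>\<^sub>M borel"

definition svt_out_space :: "nat \<Rightarrow> (nat \<Rightarrow> nat \<times> real) measure" where
  "svt_out_space n = (\<Pi>\<^sub>M i\<in>{..<n}. svt_slot_space)"

definition svt_test :: "(nat \<Rightarrow> 'a multiset \<Rightarrow> real) \<Rightarrow> (nat \<Rightarrow> real) \<Rightarrow> 'a multiset \<Rightarrow>
    real \<Rightarrow> (nat \<Rightarrow> real) \<Rightarrow> nat \<Rightarrow> bool" where
  "svt_test q T D \<rho> \<nu> i \<longleftrightarrow> q i D + \<nu> i \<ge> T i + \<rho>"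

text \<open>Query \<open>i\<close> is reached iff fewer than \<open>c\<close> earlier queries gave a positive
answer (the counter is incremented on each positive answer and the algorithm
aborts as soon as it reaches \<open>c\<close>).\<close>
definition svt_output :: "nat \<Rightarrow> nat \<Rightarrow> real \<Rightarrow> (nat \<Rightarrow> 'a multiset \<Rightarrow> real) \<Rightarrow> (nat \<Rightarrow> real) \<Rightarrow>
    'a multiset \<Rightarrow> real \<times> (nat \<Rightarrow> real) \<times> (nat \<Rightarrow> real) \<Rightarrow> (nat \<Rightarrow> nat \<times> real)" where
  "svt_output n c \<epsilon>3 q T D = (\<lambda>(\<rho>, \<nu>, \<eta>). \<lambda>i.
     if i < n then
       (if card {j. j < i \<and> svt_test q T D \<rho> \<nu> j} < c then
          (if svt_test q T D \<rho> \<nu> i then (1, if \<epsilon>3 > 0 then q i D + \<eta> i else 0)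
           else (0, 0))
        else (2, 0))
     else undefined)"

definition svt_mod :: "nat \<Rightarrow> nat \<Rightarrow> real \<Rightarrow> real \<Rightarrow> real \<Rightarrow> real \<Rightarrow>
    (nat \<Rightarrow> 'a multiset \<Rightarrow> real) \<Rightarrow> (nat \<Rightarrow> real) \<Rightarrow> 'a multiset \<Rightarrow> (nat \<Rightarrow> nat \<times> real) measure" where
  "svt_mod n c \<Delta> \<epsilon>1 \<epsilon>2 \<epsilon>3 q T D =
     distr (svt_noise n c \<Delta> \<epsilon>1 \<epsilon>2 \<epsilon>3) (svt_out_space n) (svt_output n c \<epsilon>3 q T D)"

end

theory Submission
  imports Defs
begin

text \<open>Condition on the threshold noise \<open>\<rho>\<close>. For fixed \<open>\<rho>\<close> the algorithm compares independent
noisy queries with the fixed thresholds \<open>T i + \<rho> - q i D\<close>. By monotonicity, passing from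
\<open>D\<close> to \<open>D'\<close> moves all thresholds in the same direction; after shifting \<open>\<rho>\<close> by \<open>0\<close> or \<open>\<Delta>\<close>, which
costs a factor \<open>exp \<epsilon>1\<close>, every threshold moves up by at most \<open>\<Delta>\<close>. Raising a threshold only makes a
negative answer more likely, while a positive answer together with its noisy value becomes at most
\<open>exp ((\<epsilon>2 + \<epsilon>3) / c)\<close> times less likely. A coupling of the query noises coordinate by coordinate
charges this factor once per positive answer, and there are at most \<open>c\<close> of them.\<close>

section \<open>The Laplace distribution\<close>

lemma lap_density_nonneg: "b > 0 \<Longrightarrow> 0 \<le> lap_density b x"
  by (simp add: lap_density_def)

lemma lap_density_measurable[measurable]: "lap_density b \<in> borel_measurable borel"
  unfolding lap_density_def by measurable

lemma sets_Lap[simp, measurable_cong]: "sets (Lap b) = sets borel"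
  by (simp add: Lap_def)

lemma space_Lap[simp]: "space (Lap b) = UNIV"
  by (simp add: Lap_def)

text \<open>The Laplace density is the even part of the exponential density.\<close>
lemma prob_space_Lap:
  assumes b: "b > 0"
  shows "prob_space (Lap b)"
proof -
  let ?e = "exponential_density (1/b)"
  have exp_total: "(\<integral>\<^sup>+x. ennreal (?e x) \<partial>lborel) = 1"
  proof -
    interpret prob_space "density lborel ?e"
      using b by (intro prob_space_exponential_density) simp
    show ?thesis
      using emeasure_space_1 by (simp add: emeasure_density)
  qed
  have exp_reflected_total: "(\<integral>\<^sup>+x. ennreal (?e (- x)) \<partial>lborel) = 1"
    using nn_integral_real_affine[of "\<lambda>x. ennreal (?e x)" "-1" 0] exp_total by simp
  have "(\<integral>\<^sup>+x. ennreal (lap_density b x) \<partial>lborel) =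
        (\<integral>\<^sup>+x. ennreal (?e x) / 2 + ennreal (?e (-x)) / 2 \<partial>lborel)"
  proof (rule nn_integral_cong_AE)
    show "AE x in lborel. ennreal (lap_density b x) = ennreal (?e x) / 2 + ennreal (?e (- x)) / 2"
      using AE_lborel_singleton[of "0::real"]
    proof eventually_elim
      case (elim x)
      have "0 \<le> ?e y" for y
        using b by (simp add: exponential_density_def)
      then have "ennreal (?e x) / 2 + ennreal (?e (- x)) / 2 = ennreal (?e x / 2 + ?e (-x) / 2)"
        by (simp add: ennreal_divide_numeral)
      also have "?e x / 2 + ?e (-x) / 2 = lap_density b x"
        using elim b by (auto simp: exponential_density_def lap_density_def)
      finally show ?case by simp
    qed
  qed
  also have "\<dots> = (\<integral>\<^sup>+x. ennreal (?e x) \<partial>lborel) / 2 + (\<integral>\<^sup>+x. ennreal (?e (-x)) \<partial>lborel) / 2"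
    by (subst nn_integral_add) (auto simp: nn_integral_divide)
  also have "\<dots> = 1"
    using exp_total exp_reflected_total by (simp add: mult_2[symmetric] ennreal_times_divide)
  finally show ?thesis
    by (intro prob_spaceI) (simp add: Lap_def emeasure_density)
qed

lemma product_sigma_finite_Lap: "b > 0 \<Longrightarrow> product_sigma_finite (\<lambda>_. Lap b)"
  using prob_space_Lap by (simp add: product_sigma_finite_def prob_space_imp_sigma_finite)

lemma lap_density_shift_le:
  assumes b: "b > 0"
  shows "lap_density b (x - d) \<le> exp (\<bar>d\<bar> / b) * lap_density b x"
proof -
  have "- \<bar>x - d\<bar> / b \<le> \<bar>d\<bar> / b + - \<bar>x\<bar> / b"
    using b by (simp add: divide_simps)
  then have "exp (- \<bar>x - d\<bar> / b) \<le> exp (\<bar>d\<bar> / b) * exp (- \<bar>x\<bar> / b)"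
    by (simp add: exp_add[symmetric])
  then show ?thesis
    using b by (simp add: lap_density_def divide_right_mono)
qed

lemma nn_integral_Lap_shift:
  assumes b: "b > 0" and f[measurable]: "f \<in> borel_measurable borel"
  shows "(\<integral>\<^sup>+x. f (x + d) \<partial>Lap b) \<le> ennreal (exp (\<bar>d\<bar> / b)) * (\<integral>\<^sup>+x. f x \<partial>Lap b)"
proof -
  have "(\<integral>\<^sup>+x. f (x + d) \<partial>Lap b) = (\<integral>\<^sup>+x. ennreal (lap_density b x) * f (x + d) \<partial>lborel)"
    unfolding Lap_def by (simp add: nn_integral_density)
  also have "\<dots> = (\<integral>\<^sup>+x. ennreal (lap_density b (x - d)) * f x \<partial>lborel)"
    using nn_integral_real_affine[of "\<lambda>x. ennreal (lap_density b x) * f (x + d)" 1 "-d"] by simp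
  also have "\<dots> \<le> (\<integral>\<^sup>+x. ennreal (exp (\<bar>d\<bar> / b)) * (ennreal (lap_density b x) * f x) \<partial>lborel)"
  proof (rule nn_integral_mono)
    fix x
    have "ennreal (lap_density b (x - d)) \<le> ennreal (exp (\<bar>d\<bar> / b) * lap_density b x)"
      using lap_density_shift_le[OF b] by (rule ennreal_leI)
    also have "\<dots> = ennreal (exp (\<bar>d\<bar> / b)) * ennreal (lap_density b x)"
      by (simp add: ennreal_mult lap_density_nonneg[OF b])
    finally show "ennreal (lap_density b (x - d)) * f x \<le> ennreal (exp (\<bar>d\<bar> / b)) * (ennreal (lap_density b x) * f x)"
      by (simp add: mult.assoc[symmetric] mult_right_mono)
  qed
  also have "\<dots> = ennreal (exp (\<bar>d\<bar> / b)) * (\<integral>\<^sup>+x. f x \<partial>Lap b)"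
    unfolding Lap_def by (simp add: nn_integral_density nn_integral_cmult)
  finally show ?thesis .
qed

lemma nn_integral_Lap_le_shifted:
  assumes b: "b > 0" and [measurable]: "f \<in> borel_measurable borel" "g \<in> borel_measurable borel"
    and le: "\<And>x. f x \<le> K * g (x + d)"
  shows "(\<integral>\<^sup>+x. f x \<partial>Lap b) \<le> K * ennreal (exp (\<bar>d\<bar> / b)) * (\<integral>\<^sup>+x. g x \<partial>Lap b)"
proof -
  have "(\<integral>\<^sup>+x. f x \<partial>Lap b) \<le> (\<integral>\<^sup>+x. K * g (x + d) \<partial>Lap b)"
    using le by (intro nn_integral_mono) simp
  also have "\<dots> = K * (\<integral>\<^sup>+x. g (x + d) \<partial>Lap b)"
    by (simp add: nn_integral_cmult)
  also have "\<dots> \<le> K * ennreal (exp (\<bar>d\<bar> / b)) * (\<integral>\<^sup>+x. g x \<partial>Lap b)"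
    unfolding mult.assoc by (intro mult_left_mono nn_integral_Lap_shift b) auto
  finally show ?thesis .
qed

lemma emeasure_Lap_atLeast_shift:
  assumes b: "b > 0" and close: "\<bar>a' - a\<bar> \<le> l * b"
  shows "emeasure (Lap b) {a..} \<le> ennreal (exp l) * emeasure (Lap b) {a'..}"
proof -
  have "emeasure (Lap b) {a..} = (\<integral>\<^sup>+t. indicator {a..} t \<partial>Lap b)"
    by simp
  also have "\<dots> = (\<integral>\<^sup>+t. indicator {a'..} (t + (a' - a)) \<partial>Lap b)"
    by (intro nn_integral_cong) (auto simp: indicator_def)
  also have "\<dots> \<le> ennreal (exp (\<bar>a' - a\<bar> / b)) * emeasure (Lap b) {a'..}"
    using nn_integral_Lap_shift[OF b, of "indicator {a'..}" "a' - a"] by simp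
  also have "\<dots> \<le> ennreal (exp l) * emeasure (Lap b) {a'..}"
    using b close by (intro mult_right_mono ennreal_leI) (auto simp: divide_le_eq)
  finally show ?thesis .
qed

section \<open>Sparse vector outputs for fixed thresholds\<close>

text \<open>Slot \<open>i\<close> of the output when query \<open>i\<close> has threshold \<open>a\<close> and true answer \<open>m\<close>, \<open>k\<close> earlier
answers were positive, and the noises of query \<open>i\<close> are \<open>y = (\<nu>\<^sub>i, \<eta>\<^sub>i)\<close>; the test
\<open>q\<^sub>i(D) + \<nu>\<^sub>i \<ge> T\<^sub>i + \<rho>\<close> becomes \<open>a \<le> \<nu>\<^sub>i\<close> with \<open>a = T\<^sub>i + \<rho> - q\<^sub>i(D)\<close>.\<close>
definition sv_slot :: "nat \<Rightarrow> real \<Rightarrow> real \<Rightarrow> real \<Rightarrow> nat \<Rightarrow> real \<times> real \<Rightarrow> nat \<times> real" where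
  "sv_slot c e a m k y =
     (if k < c then (if a \<le> fst y then (1, if e > 0 then m + snd y else 0) else (0, 0)) else (2, 0))"

definition sv_output :: "nat \<Rightarrow> nat \<Rightarrow> real \<Rightarrow> (nat \<Rightarrow> real) \<Rightarrow> (nat \<Rightarrow> real) \<Rightarrow>
    (nat \<Rightarrow> real) \<times> (nat \<Rightarrow> real) \<Rightarrow> nat \<Rightarrow> nat \<times> real" where
  "sv_output n c e a m x = (\<lambda>i. if i < n
     then sv_slot c e (a i) (m i) (card {j. j < i \<and> a j \<le> fst x j}) (fst x i, snd x i)
     else undefined)"

definition count_positive :: "nat \<Rightarrow> (nat \<Rightarrow> nat \<times> real) \<Rightarrow> nat" where
  "count_positive n w = card {j. j < n \<and> fst (w j) = 1}"

definition sv_append :: "nat \<Rightarrow> nat \<Rightarrow> real \<Rightarrow> real \<Rightarrow> real \<Rightarrow> (nat \<Rightarrow> nat \<times> real) \<Rightarrow>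
    real \<times> real \<Rightarrow> nat \<Rightarrow> nat \<times> real" where
  "sv_append n c e a m w y = w(n := sv_slot c e a m (count_positive n w) y)"

abbreviation sv_noise :: "nat \<Rightarrow> real \<Rightarrow> real \<Rightarrow> ((nat \<Rightarrow> real) \<times> (nat \<Rightarrow> real)) measure" where
  "sv_noise n b2 b3 \<equiv> (\<Pi>\<^sub>M i\<in>{..<n}. Lap b2) \<Otimes>\<^sub>M (\<Pi>\<^sub>M i\<in>{..<n}. Lap b3)"

lemma card_Collect_less_Suc:
  "card {j. j < Suc n \<and> P j} = card {j. j < n \<and> P j} + (if P n then 1 else 0)"
proof -
  have "{j. j < Suc n \<and> P j} = {j. j < n \<and> P j} \<union> (if P n then {n} else {})"
    by (auto simp: less_Suc_eq)
  then show ?thesis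
    by (simp add: card_Un_disjoint)
qed

lemma count_positive_Suc_fun_upd:
  "count_positive (Suc n) (w(n := s)) = count_positive n w + (if fst s = 1 then 1 else 0)"
proof -
  have "count_positive n (w(n := s)) = count_positive n w"
    unfolding count_positive_def by (rule arg_cong[where f = card]) auto
  then show ?thesis
    by (simp add: count_positive_def card_Collect_less_Suc)
qed

lemma count_positive_sv_output:
  "count_positive n (sv_output n c e a m x) = min c (card {j. j < n \<and> a j \<le> fst x j})"
proof (induction n)
  case 0
  then show ?case by (simp add: count_positive_def)
next
  case (Suc n)
  have step: "sv_output (Suc n) c e a m x = (sv_output n c e a m x)(n :=
      sv_slot c e (a n) (m n) (card {j. j < n \<and> a j \<le> fst x j}) (fst x n, snd x n))"
    by (auto simp: sv_output_def less_Suc_eq)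
  show ?case
    unfolding step count_positive_Suc_fun_upd Suc card_Collect_less_Suc by (auto simp: sv_slot_def)
qed

lemma count_positive_sv_output_le: "count_positive n (sv_output n c e a m x) \<le> c"
  by (simp add: count_positive_sv_output)

text \<open>The slot only depends on the number of earlier positive answers up to the cutoff,
so the count of passed tests may be replaced by the count of positive answers.\<close>
lemma sv_output_Suc:
  "sv_output (Suc n) c e a m x = sv_append n c e (a n) (m n) (sv_output n c e a m x) (fst x n, snd x n)"
proof -
  have "sv_slot c e (a n) (m n) (card {j. j < n \<and> a j \<le> fst x j}) =
        sv_slot c e (a n) (m n) (count_positive n (sv_output n c e a m x))"
    by (auto simp: count_positive_sv_output sv_slot_def fun_eq_iff)
  then show ?thesis
    by (auto simp: sv_output_def sv_append_def less_Suc_eq)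
qed

lemma sv_output_fun_upd_last:
  "sv_output n c e a m ((fst x)(n := t), (snd x)(n := u)) = sv_output n c e a m x"
proof -
  have "{j. j < i \<and> a j \<le> ((fst x)(n := t)) j} = {j. j < i \<and> a j \<le> fst x j}" if "i < n" for i
    using that by auto
  then show ?thesis
    by (auto simp: sv_output_def)
qed

lemma real_card_Collect_less: "real (card {j. j < (k::nat) \<and> P j}) = (\<Sum>j<k. if P j then 1 else 0)"
  by (induction k) (simp_all add: card_Collect_less_Suc)

lemma sv_output_extensional: "sv_output n c e a m x \<in> extensional {..<n}"
  by (simp add: sv_output_def extensional_def)

lemma measurable_sv_output_param:
  assumes A: "\<And>i. i < n \<Longrightarrow> (\<lambda>z. A z i) \<in> borel_measurable M"
    and X1: "\<And>i. i < n \<Longrightarrow> (\<lambda>z. fst (X z) i) \<in> borel_measurable M"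
    and X2: "\<And>i. i < n \<Longrightarrow> (\<lambda>z. snd (X z) i) \<in> borel_measurable M"
  shows "(\<lambda>z. sv_output n c e (A z) m (X z)) \<in> measurable M (svt_out_space n)"
  unfolding svt_out_space_def
proof (rule measurable_PiM_single')
  fix i assume "i \<in> {..<n}"
  then have i: "i < n" by simp
  have count: "(\<lambda>z. real (card {j. j < i \<and> A z j \<le> fst (X z) j})) \<in> borel_measurable M"
    unfolding real_card_Collect_less
  proof (rule borel_measurable_sum)
    fix j assume "j \<in> {..<i}"
    then have [measurable]: "(\<lambda>z. A z j) \<in> borel_measurable M" "(\<lambda>z. fst (X z) j) \<in> borel_measurable M"
      using i A X1 by auto
    show "(\<lambda>z. if A z j \<le> fst (X z) j then 1 else 0 :: real) \<in> borel_measurable M"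
      by measurable
  qed
  have coords: "(\<lambda>z. A z i) \<in> borel_measurable M" "(\<lambda>z. fst (X z) i) \<in> borel_measurable M"
    "(\<lambda>z. snd (X z) i) \<in> borel_measurable M"
    using i A X1 X2 by auto
  have "(\<lambda>z. sv_output n c e (A z) m (X z) i) = (\<lambda>z.
      if real (card {j. j < i \<and> A z j \<le> fst (X z) j}) < real c
      then (if A z i \<le> fst (X z) i then (1, if e > 0 then m i + snd (X z) i else 0) else (0, 0))
      else (2, 0))"
    using i by (simp add: sv_output_def sv_slot_def fun_eq_iff)
  also have "\<dots> \<in> measurable M svt_slot_space"
    unfolding svt_slot_space_def
    by (intro measurable_If measurable_Pair measurable_const borel_measurable_less
        borel_measurable_le borel_measurable_add count coords) auto
  finally show "(\<lambda>z. sv_output n c e (A z) m (X z) i) \<in> measurable M svt_slot_space" .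
qed (simp add: svt_slot_space_def space_pair_measure PiE_iff sv_output_extensional)

lemma measurable_sv_output: "sv_output n c e a m \<in> measurable (sv_noise n b2 b3) (svt_out_space n)"
  using measurable_sv_output_param[where A = "\<lambda>_. a" and X = "\<lambda>x. x" and M = "sv_noise n b2 b3"]
  by measurable

lemma measurable_count_positive[measurable]:
  "(\<lambda>w. real (count_positive n w)) \<in> borel_measurable (svt_out_space n)"
  unfolding count_positive_def real_card_Collect_less svt_out_space_def svt_slot_space_def
  by measurable

lemma measurable_sv_slot: "sv_slot c e a m k \<in> measurable (Lap b2 \<Otimes>\<^sub>M Lap b3) svt_slot_space"
  unfolding sv_slot_def[abs_def] svt_slot_space_def by measurable

lemma measurable_sv_append:
  "(\<lambda>(w, y). sv_append n c e a m w y) \<in>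
     measurable (svt_out_space n \<Otimes>\<^sub>M (Lap b2 \<Otimes>\<^sub>M Lap b3)) (svt_out_space (Suc n))"
proof -
  have slot: "(\<lambda>(w, y). sv_slot c e a m (count_positive n w) y) \<in>
      measurable (svt_out_space n \<Otimes>\<^sub>M (Lap b2 \<Otimes>\<^sub>M Lap b3)) svt_slot_space"
  proof -
    have "(\<lambda>(w, y). sv_slot c e a m (count_positive n w) y) = (\<lambda>p.
        if real (count_positive n (fst p)) < real c
        then (if a \<le> fst (snd p) then (1, if e > 0 then m + snd (snd p) else 0) else (0, 0))
        else (2, 0))"
      by (auto simp: sv_slot_def fun_eq_iff)
    also have "\<dots> \<in> measurable (svt_out_space n \<Otimes>\<^sub>M (Lap b2 \<Otimes>\<^sub>M Lap b3)) svt_slot_space"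
      unfolding svt_slot_space_def by measurable
    finally show ?thesis .
  qed
  have "(\<lambda>p. (fst p)(n := (\<lambda>(w, y). sv_slot c e a m (count_positive n w) y) p)) \<in>
      measurable (svt_out_space n \<Otimes>\<^sub>M (Lap b2 \<Otimes>\<^sub>M Lap b3)) (svt_out_space (Suc n))"
    unfolding svt_out_space_def
    by (rule measurable_fun_upd[where J = "{..<n}"]) (auto intro: slot[unfolded svt_out_space_def])
  then show ?thesis
    by (simp add: sv_append_def case_prod_beta')
qed

lemma measurable_pair_fun_upd:
  "(\<lambda>(z, y). ((fst z)(i := fst y), (snd z)(i := snd y))) \<in>
     measurable ((Pi\<^sub>M I M \<Otimes>\<^sub>M Pi\<^sub>M I N) \<Otimes>\<^sub>M (M i \<Otimes>\<^sub>M N i)) (Pi\<^sub>M (insert i I) M \<Otimes>\<^sub>M Pi\<^sub>M (insert i I) N)"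
proof -
  have "(\<lambda>p. (fst (fst p))(i := fst (snd p))) \<in> measurable
      ((Pi\<^sub>M I M \<Otimes>\<^sub>M Pi\<^sub>M I N) \<Otimes>\<^sub>M (M i \<Otimes>\<^sub>M N i)) (Pi\<^sub>M (insert i I) M)"
    "(\<lambda>p. (snd (fst p))(i := snd (snd p))) \<in> measurable
      ((Pi\<^sub>M I M \<Otimes>\<^sub>M Pi\<^sub>M I N) \<Otimes>\<^sub>M (M i \<Otimes>\<^sub>M N i)) (Pi\<^sub>M (insert i I) N)"
    by (rule measurable_fun_upd[where J = I]; simp)+
  from measurable_Pair[OF this] show ?thesis
    by (simp add: case_prod_beta')
qed

lemma nn_integral_pair_PiM_insert_iterated:
  fixes f :: "('i \<Rightarrow> 'a) \<times> ('i \<Rightarrow> 'b) \<Rightarrow> ennreal"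
  assumes "product_sigma_finite M" "product_sigma_finite N" "finite I" "i \<notin> I"
    and f[measurable]: "f \<in> borel_measurable (Pi\<^sub>M (insert i I) M \<Otimes>\<^sub>M Pi\<^sub>M (insert i I) N)"
  shows "(\<integral>\<^sup>+z. f z \<partial>(Pi\<^sub>M (insert i I) M \<Otimes>\<^sub>M Pi\<^sub>M (insert i I) N)) =
    (\<integral>\<^sup>+v. \<integral>\<^sup>+w. \<integral>\<^sup>+t. \<integral>\<^sup>+u. f (v(i := t), w(i := u)) \<partial>N i \<partial>M i \<partial>Pi\<^sub>M I N \<partial>Pi\<^sub>M I M)"
proof -
  interpret M: product_sigma_finite M by fact
  interpret N: product_sigma_finite N by fact
  interpret NI: sigma_finite_measure "Pi\<^sub>M I N" using N.sigma_finite \<open>finite I\<close> .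
  interpret NJ: sigma_finite_measure "Pi\<^sub>M (insert i I) N" using N.sigma_finite \<open>finite I\<close> by simp
  interpret MN: pair_sigma_finite "M i" "Pi\<^sub>M I N"
    by (intro pair_sigma_finite.intro M.sigma_finite_measures NI.sigma_finite_measure_axioms)
  have "(\<integral>\<^sup>+z. f z \<partial>(Pi\<^sub>M (insert i I) M \<Otimes>\<^sub>M Pi\<^sub>M (insert i I) N)) =
      (\<integral>\<^sup>+v. \<integral>\<^sup>+w. f (v, w) \<partial>Pi\<^sub>M (insert i I) N \<partial>Pi\<^sub>M (insert i I) M)"
    by (rule NJ.nn_integral_fst[symmetric]) simp
  also have "\<dots> = (\<integral>\<^sup>+v. \<integral>\<^sup>+t. \<integral>\<^sup>+w. f (v(i := t), w) \<partial>Pi\<^sub>M (insert i I) N \<partial>M i \<partial>Pi\<^sub>M I M)"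
    using \<open>finite I\<close> \<open>i \<notin> I\<close> by (intro M.product_nn_integral_insert) measurable
  also have "\<dots> = (\<integral>\<^sup>+v. \<integral>\<^sup>+t. \<integral>\<^sup>+w. \<integral>\<^sup>+u. f (v(i := t), w(i := u)) \<partial>N i \<partial>Pi\<^sub>M I N \<partial>M i \<partial>Pi\<^sub>M I M)"
  proof (intro nn_integral_cong)
    fix v t assume "v \<in> space (Pi\<^sub>M I M)" "t \<in> space (M i)"
    then have "v(i := t) \<in> space (Pi\<^sub>M (insert i I) M)"
      by (auto simp: space_PiM PiE_def extensional_def)
    then have "(\<lambda>w. f (v(i := t), w)) \<in> borel_measurable (Pi\<^sub>M (insert i I) N)"
      by (rule measurable_compose_Pair1) simp
    then show "(\<integral>\<^sup>+w. f (v(i := t), w) \<partial>Pi\<^sub>M (insert i I) N) =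
        (\<integral>\<^sup>+w. \<integral>\<^sup>+u. f (v(i := t), w(i := u)) \<partial>N i \<partial>Pi\<^sub>M I N)"
      using \<open>finite I\<close> \<open>i \<notin> I\<close> by (intro N.product_nn_integral_insert)
  qed
  also have "\<dots> = (\<integral>\<^sup>+v. \<integral>\<^sup>+w. \<integral>\<^sup>+t. \<integral>\<^sup>+u. f (v(i := t), w(i := u)) \<partial>N i \<partial>M i \<partial>Pi\<^sub>M I N \<partial>Pi\<^sub>M I M)"
  proof (intro nn_integral_cong)
    fix v assume v: "v \<in> space (Pi\<^sub>M I M)"
    have "(\<lambda>p. v(i := fst (fst p))) \<in> measurable ((M i \<Otimes>\<^sub>M Pi\<^sub>M I N) \<Otimes>\<^sub>M N i) (Pi\<^sub>M (insert i I) M)"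
      "(\<lambda>p. (snd (fst p))(i := snd p)) \<in> measurable ((M i \<Otimes>\<^sub>M Pi\<^sub>M I N) \<Otimes>\<^sub>M N i) (Pi\<^sub>M (insert i I) N)"
      by (rule measurable_fun_upd[where J = I]; simp add: v)+
    from measurable_compose[OF measurable_Pair[OF this] f]
    have "(\<lambda>(t, w). \<integral>\<^sup>+u. f (v(i := t), w(i := u)) \<partial>N i) \<in> borel_measurable (M i \<Otimes>\<^sub>M Pi\<^sub>M I N)"
      using sigma_finite_measure.borel_measurable_nn_integral[OF N.sigma_finite_measures,
          of "\<lambda>p u. f (v(i := fst p), (snd p)(i := u))"]
      by (simp add: case_prod_beta')
    then show "(\<integral>\<^sup>+t. \<integral>\<^sup>+w. \<integral>\<^sup>+u. f (v(i := t), w(i := u)) \<partial>N i \<partial>Pi\<^sub>M I N \<partial>M i) =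
        (\<integral>\<^sup>+w. \<integral>\<^sup>+t. \<integral>\<^sup>+u. f (v(i := t), w(i := u)) \<partial>N i \<partial>M i \<partial>Pi\<^sub>M I N)"
      by (rule MN.Fubini'[symmetric])
  qed
  finally show ?thesis .
qed

lemma nn_integral_pair_PiM_insert:
  fixes f :: "('i \<Rightarrow> 'a) \<times> ('i \<Rightarrow> 'b) \<Rightarrow> ennreal"
  assumes M: "product_sigma_finite M" and N: "product_sigma_finite N" and "finite I" "i \<notin> I"
    and f[measurable]: "f \<in> borel_measurable (Pi\<^sub>M (insert i I) M \<Otimes>\<^sub>M Pi\<^sub>M (insert i I) N)"
  shows "(\<integral>\<^sup>+z. f z \<partial>(Pi\<^sub>M (insert i I) M \<Otimes>\<^sub>M Pi\<^sub>M (insert i I) N)) =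
    (\<integral>\<^sup>+z. \<integral>\<^sup>+y. f ((fst z)(i := fst y), (snd z)(i := snd y)) \<partial>(M i \<Otimes>\<^sub>M N i)
       \<partial>(Pi\<^sub>M I M \<Otimes>\<^sub>M Pi\<^sub>M I N))"
proof -
  let ?upd = "\<lambda>(z, y). ((fst z)(i := fst y), (snd z)(i := snd y))"
  interpret NI: sigma_finite_measure "Pi\<^sub>M I N"
    using N \<open>finite I\<close> by (rule product_sigma_finite.sigma_finite)
  have Ni: "sigma_finite_measure (N i)" and MiNi: "sigma_finite_measure (M i \<Otimes>\<^sub>M N i)"
    using M N by (auto intro: sigma_finite_pair_measure simp: product_sigma_finite_def)
  have f_upd: "(\<lambda>(z, y). f (?upd (z, y))) \<in> borel_measurable
      ((Pi\<^sub>M I M \<Otimes>\<^sub>M Pi\<^sub>M I N) \<Otimes>\<^sub>M (M i \<Otimes>\<^sub>M N i))"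
    using measurable_compose[OF measurable_pair_fun_upd f] by (simp add: case_prod_beta')
  have "(\<integral>\<^sup>+z. f z \<partial>(Pi\<^sub>M (insert i I) M \<Otimes>\<^sub>M Pi\<^sub>M (insert i I) N)) =
      (\<integral>\<^sup>+v. \<integral>\<^sup>+w. \<integral>\<^sup>+t. \<integral>\<^sup>+u. f (v(i := t), w(i := u)) \<partial>N i \<partial>M i \<partial>Pi\<^sub>M I N \<partial>Pi\<^sub>M I M)"
    by (rule nn_integral_pair_PiM_insert_iterated[OF assms])
  also have "\<dots> = (\<integral>\<^sup>+v. \<integral>\<^sup>+w. \<integral>\<^sup>+y. f (?upd ((v, w), y)) \<partial>(M i \<Otimes>\<^sub>M N i) \<partial>Pi\<^sub>M I N \<partial>Pi\<^sub>M I M)"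
  proof (intro nn_integral_cong)
    fix v w assume "v \<in> space (Pi\<^sub>M I M)" "w \<in> space (Pi\<^sub>M I N)"
    then have "(v, w) \<in> space (Pi\<^sub>M I M \<Otimes>\<^sub>M Pi\<^sub>M I N)"
      by (simp add: space_pair_measure)
    from sigma_finite_measure.nn_integral_fst[OF Ni measurable_compose_Pair1[OF this f_upd]]
    show "(\<integral>\<^sup>+t. \<integral>\<^sup>+u. f (v(i := t), w(i := u)) \<partial>N i \<partial>M i) =
        (\<integral>\<^sup>+y. f (?upd ((v, w), y)) \<partial>(M i \<Otimes>\<^sub>M N i))"
      by simp
  qed
  also have "\<dots> = (\<integral>\<^sup>+z. \<integral>\<^sup>+y. f (?upd (z, y)) \<partial>(M i \<Otimes>\<^sub>M N i) \<partial>(Pi\<^sub>M I M \<Otimes>\<^sub>M Pi\<^sub>M I N))"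
    using sigma_finite_measure.borel_measurable_nn_integral[OF MiNi f_upd]
    by (intro NI.nn_integral_fst) simp
  finally show ?thesis
    by simp
qed

section \<open>Coupling the query noises\<close>

lemma nn_integral_sv_slot:
  fixes g :: "nat \<times> real \<Rightarrow> ennreal"
  assumes b2: "b2 > 0" and b3: "b3 > 0" and "k < c"
    and g[measurable]: "g \<in> borel_measurable svt_slot_space"
  shows "(\<integral>\<^sup>+y. g (sv_slot c e a m k y) \<partial>(Lap b2 \<Otimes>\<^sub>M Lap b3)) =
    (\<integral>\<^sup>+u. g (1, if e > 0 then m + u else 0) \<partial>Lap b3) * emeasure (Lap b2) {a..}
      + g (0, 0) * emeasure (Lap b2) {..<a}"
proof -
  interpret L3: prob_space "Lap b3"
    using b3 by (rule prob_space_Lap)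
  define X where "X = (\<integral>\<^sup>+u. g (1, if e > 0 then m + u else 0) \<partial>Lap b3)"
  have "(\<integral>\<^sup>+y. g (sv_slot c e a m k y) \<partial>(Lap b2 \<Otimes>\<^sub>M Lap b3)) =
      (\<integral>\<^sup>+t. \<integral>\<^sup>+u. g (sv_slot c e a m k (t, u)) \<partial>Lap b3 \<partial>Lap b2)"
    using measurable_compose[OF measurable_sv_slot g] by (rule L3.nn_integral_fst[symmetric])
  also have "\<dots> = (\<integral>\<^sup>+t. X * indicator {a..} t + g (0, 0) * indicator {..<a} t \<partial>Lap b2)"
  proof (intro nn_integral_cong)
    fix t
    have "emeasure (Lap b3) UNIV = 1"
      using L3.emeasure_space_1 by simp
    then show "(\<integral>\<^sup>+u. g (sv_slot c e a m k (t, u)) \<partial>Lap b3) =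
        X * indicator {a..} t + g (0, 0) * indicator {..<a} t"
      using \<open>k < c\<close> by (cases "a \<le> t") (auto simp: sv_slot_def X_def intro!: nn_integral_cong)
  qed
  also have "\<dots> = X * emeasure (Lap b2) {a..} + g (0, 0) * emeasure (Lap b2) {..<a}"
    by (subst nn_integral_add) (auto simp: nn_integral_cmult)
  finally show ?thesis
    by (simp add: X_def)
qed

lemma nn_integral_Lap_answer_shift:
  fixes h :: "real \<Rightarrow> ennreal"
  assumes b: "b > 0" and l: "0 \<le> l" and close: "e > 0 \<Longrightarrow> \<bar>m - m'\<bar> \<le> l * b"
    and h[measurable]: "h \<in> borel_measurable borel"
  shows "(\<integral>\<^sup>+u. h (if e > 0 then m + u else 0) \<partial>Lap b) \<le>
    ennreal (exp l) * (\<integral>\<^sup>+u. h (if e > 0 then m' + u else 0) \<partial>Lap b)"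
proof (cases "e > 0")
  case True
  have "(\<integral>\<^sup>+u. h (m + u) \<partial>Lap b) = (\<integral>\<^sup>+u. h (m' + (u + (m - m'))) \<partial>Lap b)"
    by (simp add: algebra_simps)
  also have "\<dots> \<le> ennreal (exp (\<bar>m - m'\<bar> / b)) * (\<integral>\<^sup>+u. h (m' + u) \<partial>Lap b)"
    using b by (rule nn_integral_Lap_shift) measurable
  also have "\<dots> \<le> ennreal (exp l) * (\<integral>\<^sup>+u. h (m' + u) \<partial>Lap b)"
    using close[OF True] b by (intro mult_right_mono ennreal_leI) (auto simp: divide_le_eq)
  finally show ?thesis
    using True by simp
next
  case False
  have "1 \<le> ennreal (exp l)"
    using l by (simp add: ennreal_leI[of 1, simplified])
  then show ?thesis
    using False mult_right_mono[of 1 "ennreal (exp l)"] by simp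
qed

text \<open>Raising the threshold from \<open>a\<close> to \<open>a'\<close> only helps the negative answer, and costs at most
\<open>exp (l2 + l3)\<close> on the positive one.\<close>
lemma nn_integral_sv_slot_le:
  fixes g :: "nat \<times> real \<Rightarrow> ennreal"
  assumes b2: "b2 > 0" and b3: "b3 > 0" and "a \<le> a'" "a' - a \<le> l2 * b2"
    and close: "e > 0 \<Longrightarrow> \<bar>m - m'\<bar> \<le> l3 * b3" and l3: "0 \<le> l3"
    and g[measurable]: "g \<in> borel_measurable svt_slot_space"
  shows "(\<integral>\<^sup>+y. g (sv_slot c e a m k y) \<partial>(Lap b2 \<Otimes>\<^sub>M Lap b3)) \<le>
    (\<integral>\<^sup>+y. g (sv_slot c e a' m' k y) *
       (if fst (sv_slot c e a' m' k y) = 1 then ennreal (exp (l2 + l3)) else 1) \<partial>(Lap b2 \<Otimes>\<^sub>M Lap b3))"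
proof (cases "k < c")
  case False
  then show ?thesis
    by (simp add: sv_slot_def)
next
  case True
  define X where "X m = (\<integral>\<^sup>+u. g (1, if e > 0 then m + u else 0) \<partial>Lap b3)" for m
  have gm: "(\<lambda>r. g (1, r)) \<in> borel_measurable borel"
    using g unfolding svt_slot_space_def by measurable
  have answer: "X m \<le> ennreal (exp l3) * X m'"
    unfolding X_def using b3 l3 close gm by (rule nn_integral_Lap_answer_shift)
  have positive: "emeasure (Lap b2) {a..} \<le> ennreal (exp l2) * emeasure (Lap b2) {a'..}"
    using \<open>a \<le> a'\<close> \<open>a' - a \<le> l2 * b2\<close> by (intro emeasure_Lap_atLeast_shift b2) simp
  have "(\<integral>\<^sup>+y. g (sv_slot c e a m k y) \<partial>(Lap b2 \<Otimes>\<^sub>M Lap b3)) =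
      X m * emeasure (Lap b2) {a..} + g (0, 0) * emeasure (Lap b2) {..<a}"
    using nn_integral_sv_slot[OF b2 b3 True g] by (simp add: X_def)
  also have "\<dots> \<le> (ennreal (exp l3) * X m') * (ennreal (exp l2) * emeasure (Lap b2) {a'..})
      + g (0, 0) * emeasure (Lap b2) {..<a'}"
    using answer positive \<open>a \<le> a'\<close> by (intro add_mono mult_mono mult_left_mono emeasure_mono) auto
  also have "\<dots> = (\<integral>\<^sup>+u. g (1, if e > 0 then m' + u else 0) * ennreal (exp (l2 + l3)) \<partial>Lap b3)
      * emeasure (Lap b2) {a'..} + g (0, 0) * emeasure (Lap b2) {..<a'}"
  proof -
    have "(\<lambda>u. g (1, if e > 0 then m' + u else 0)) \<in> borel_measurable (Lap b3)"
      using gm by (cases "e > 0") simp_all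
    then have "(\<integral>\<^sup>+u. g (1, if e > 0 then m' + u else 0) * ennreal (exp (l2 + l3)) \<partial>Lap b3) =
        X m' * ennreal (exp (l2 + l3))"
      by (simp add: X_def nn_integral_multc)
    then show ?thesis
      by (simp add: exp_add ennreal_mult mult_ac)
  qed
  also have "\<dots> = (\<integral>\<^sup>+y. g (sv_slot c e a' m' k y) *
       (if fst (sv_slot c e a' m' k y) = 1 then ennreal (exp (l2 + l3)) else 1) \<partial>(Lap b2 \<Otimes>\<^sub>M Lap b3))"
  proof -
    have [measurable]: "(\<lambda>s. if fst s = 1 then ennreal (exp (l2 + l3)) else 1) \<in> borel_measurable svt_slot_space"
      unfolding svt_slot_space_def by measurable
    have "(\<lambda>s. g s * (if fst s = 1 then ennreal (exp (l2 + l3)) else 1)) \<in> borel_measurable svt_slot_space"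
      by measurable
    from nn_integral_sv_slot[OF b2 b3 True this, where e = e and a = a' and m = m']
    show ?thesis
      by simp
  qed
  finally show ?thesis .
qed

lemma nn_integral_sv_output_Suc:
  assumes b2: "b2 > 0" and b3: "b3 > 0"
    and G[measurable]: "G \<in> borel_measurable (svt_out_space (Suc n))"
  shows "(\<integral>\<^sup>+x. G (sv_output (Suc n) c e a m x) \<partial>sv_noise (Suc n) b2 b3) =
    (\<integral>\<^sup>+x. \<integral>\<^sup>+y. G (sv_append n c e (a n) (m n) (sv_output n c e a m x) y) \<partial>(Lap b2 \<Otimes>\<^sub>M Lap b3)
       \<partial>sv_noise n b2 b3)"
proof -
  have "(\<lambda>x. G (sv_output (Suc n) c e a m x)) \<in> borel_measurable (sv_noise (Suc n) b2 b3)"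
    using measurable_sv_output by measurable
  then have "(\<integral>\<^sup>+x. G (sv_output (Suc n) c e a m x) \<partial>sv_noise (Suc n) b2 b3) =
      (\<integral>\<^sup>+x. \<integral>\<^sup>+y. G (sv_output (Suc n) c e a m ((fst x)(n := fst y), (snd x)(n := snd y)))
         \<partial>(Lap b2 \<Otimes>\<^sub>M Lap b3) \<partial>sv_noise n b2 b3)"
    using nn_integral_pair_PiM_insert[OF product_sigma_finite_Lap[OF b2] product_sigma_finite_Lap[OF b3],
        of "{..<n}" n]
    by (simp add: lessThan_Suc)
  also have "\<dots> = (\<integral>\<^sup>+x. \<integral>\<^sup>+y. G (sv_append n c e (a n) (m n) (sv_output n c e a m x) y)
      \<partial>(Lap b2 \<Otimes>\<^sub>M Lap b3) \<partial>sv_noise n b2 b3)"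
    by (simp add: sv_output_Suc sv_output_fun_upd_last)
  finally show ?thesis .
qed

lemma nn_integral_sv_append_le:
  fixes G :: "(nat \<Rightarrow> nat \<times> real) \<Rightarrow> ennreal"
  assumes b2: "b2 > 0" and b3: "b3 > 0" and "a \<le> a'" "a' - a \<le> l2 * b2"
    and "e > 0 \<Longrightarrow> \<bar>m - m'\<bar> \<le> l3 * b3" "0 \<le> l3"
    and G[measurable]: "G \<in> borel_measurable (svt_out_space (Suc n))"
    and w: "w \<in> space (svt_out_space n)"
  shows "(\<integral>\<^sup>+y. G (sv_append n c e a m w y) \<partial>(Lap b2 \<Otimes>\<^sub>M Lap b3)) \<le>
    (\<integral>\<^sup>+y. G (sv_append n c e a' m' w y) *
       (if fst (sv_append n c e a' m' w y n) = 1 then ennreal (exp (l2 + l3)) else 1) \<partial>(Lap b2 \<Otimes>\<^sub>M Lap b3))"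
proof -
  have "(\<lambda>s. w(n := s)) \<in> measurable svt_slot_space (svt_out_space (Suc n))"
    unfolding svt_out_space_def
    by (rule measurable_fun_upd[where J = "{..<n}"]) (use w in \<open>auto simp: svt_out_space_def\<close>)
  then have "(\<lambda>s. G (w(n := s))) \<in> borel_measurable svt_slot_space"
    by measurable
  from nn_integral_sv_slot_le[OF b2 b3 assms(3-6) this]
  show ?thesis
    by (simp add: sv_append_def)
qed

lemma measurable_nn_integral_sv_append:
  assumes "b2 > 0" "b3 > 0" and "H \<in> borel_measurable (svt_out_space (Suc n))"
  shows "(\<lambda>w. \<integral>\<^sup>+y. H (sv_append n c e a m w y) \<partial>(Lap b2 \<Otimes>\<^sub>M Lap b3)) \<in> borel_measurable (svt_out_space n)"
proof -
  have "sigma_finite_measure (Lap b2 \<Otimes>\<^sub>M Lap b3)"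
    by (intro sigma_finite_pair_measure prob_space_imp_sigma_finite prob_space_Lap assms(1,2))
  moreover have "(\<lambda>(w, y). H (sv_append n c e a m w y)) \<in>
      borel_measurable (svt_out_space n \<Otimes>\<^sub>M (Lap b2 \<Otimes>\<^sub>M Lap b3))"
    using measurable_compose[OF measurable_sv_append assms(3)] by (simp add: case_prod_beta')
  ultimately show ?thesis
    by (rule sigma_finite_measure.borel_measurable_nn_integral)
qed

lemma exp_count_positive_sv_append:
  "ennreal (exp (L * real (count_positive (Suc n) (sv_append n c e a m w y)))) =
    ennreal (exp (L * real (count_positive n w))) *
      (if fst (sv_append n c e a m w y n) = 1 then ennreal (exp L) else 1)"
  by (simp add: sv_append_def count_positive_Suc_fun_upd distrib_left exp_add ennreal_mult)

text \<open>The noises of the two runs are coupled identically; the price is paid only for the positive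
answers of the second run.\<close>
lemma sv_output_coupling:
  assumes b2: "b2 > 0" and b3: "b3 > 0" and l3: "0 \<le> l3"
    and "\<forall>i<n. a i \<le> a' i \<and> a' i - a i \<le> l2 * b2"
    and "\<forall>i<n. e > 0 \<longrightarrow> \<bar>m i - m' i\<bar> \<le> l3 * b3"
    and "G \<in> borel_measurable (svt_out_space n)"
  shows "(\<integral>\<^sup>+x. G (sv_output n c e a m x) \<partial>sv_noise n b2 b3) \<le>
    (\<integral>\<^sup>+x. G (sv_output n c e a' m' x) *
       ennreal (exp ((l2 + l3) * real (count_positive n (sv_output n c e a' m' x)))) \<partial>sv_noise n b2 b3)"
  using assms(4-6)
proof (induction n arbitrary: G)
  case 0
  have "sv_output 0 c e a m = sv_output 0 c e a' m'"
    by (simp add: sv_output_def fun_eq_iff)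
  then show ?case
    by (simp add: count_positive_def)
next
  case (Suc n)
  note G[measurable] = Suc.prems(3)
  let ?LL = "Lap b2 \<Otimes>\<^sub>M Lap b3"
  let ?append = "sv_append n c e (a' n) (m' n)"
  let ?weight = "\<lambda>k. ennreal (exp ((l2 + l3) * real k))"
  define G' where "G' w = G w * (if fst (w n) = 1 then ennreal (exp (l2 + l3)) else 1)" for w
  define R where "R w = (\<integral>\<^sup>+y. G' (?append w y) \<partial>?LL)" for w
  have "(\<lambda>w. w n) \<in> measurable (svt_out_space (Suc n)) svt_slot_space"
    unfolding svt_out_space_def by (rule measurable_component_singleton) simp
  then have G'_measurable: "G' \<in> borel_measurable (svt_out_space (Suc n))"
    unfolding G'_def svt_slot_space_def by measurable
  have "(\<integral>\<^sup>+x. G (sv_output (Suc n) c e a m x) \<partial>sv_noise (Suc n) b2 b3) =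
      (\<integral>\<^sup>+x. \<integral>\<^sup>+y. G (sv_append n c e (a n) (m n) (sv_output n c e a m x) y) \<partial>?LL \<partial>sv_noise n b2 b3)"
    by (rule nn_integral_sv_output_Suc[OF b2 b3 G])
  also have "\<dots> \<le> (\<integral>\<^sup>+x. R (sv_output n c e a m x) \<partial>sv_noise n b2 b3)"
    unfolding R_def G'_def using Suc.prems(1,2) measurable_space[OF measurable_sv_output]
    by (intro nn_integral_mono nn_integral_sv_append_le[OF b2 b3 _ _ _ l3 G]) auto
  also have "\<dots> \<le> (\<integral>\<^sup>+x. R (sv_output n c e a' m' x) *
      ?weight (count_positive n (sv_output n c e a' m' x)) \<partial>sv_noise n b2 b3)"
    unfolding R_def using Suc.prems(1,2) measurable_nn_integral_sv_append[OF b2 b3 G'_measurable]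
    by (intro Suc.IH) auto
  also have "\<dots> = (\<integral>\<^sup>+x. \<integral>\<^sup>+y. G (?append (sv_output n c e a' m' x) y) *
      ?weight (count_positive (Suc n) (?append (sv_output n c e a' m' x) y)) \<partial>?LL \<partial>sv_noise n b2 b3)"
  proof (intro nn_integral_cong)
    fix x assume "x \<in> space (sv_noise n b2 b3)"
    then have "sv_output n c e a' m' x \<in> space (svt_out_space n)"
      by (rule measurable_space[OF measurable_sv_output])
    from measurable_compose_Pair1[OF this measurable_compose[OF measurable_sv_append G'_measurable]]
    have "(\<lambda>y. G' (?append (sv_output n c e a' m' x) y)) \<in> borel_measurable ?LL"
      by simp
    then show "R (sv_output n c e a' m' x) * ?weight (count_positive n (sv_output n c e a' m' x)) =
        (\<integral>\<^sup>+y. G (?append (sv_output n c e a' m' x) y) *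
           ?weight (count_positive (Suc n) (?append (sv_output n c e a' m' x) y)) \<partial>?LL)"
      by (simp add: R_def G'_def nn_integral_cmult exp_count_positive_sv_append mult_ac)
  qed
  also have "\<dots> = (\<integral>\<^sup>+x. G (sv_output (Suc n) c e a' m' x) *
      ?weight (count_positive (Suc n) (sv_output (Suc n) c e a' m' x)) \<partial>sv_noise (Suc n) b2 b3)"
    by (rule nn_integral_sv_output_Suc[OF b2 b3, symmetric]) measurable
  finally show ?case .
qed

lemma nn_integral_sv_output_threshold_shift:
  assumes "\<Delta> > 0" "\<epsilon>2 > 0" "\<epsilon>3 \<ge> 0" "c \<ge> 1"
    and b2: "b2 = real c * \<Delta> / \<epsilon>2" and b3: "b3 = (if \<epsilon>3 > 0 then real c * \<Delta> / \<epsilon>3 else 1)"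
    and thresholds: "\<forall>i<n. a i \<le> a' i \<and> a' i \<le> a i + \<Delta>"
    and answers: "\<forall>i<n. \<bar>m i - m' i\<bar> \<le> \<Delta>"
    and G[measurable]: "G \<in> borel_measurable (svt_out_space n)"
  shows "(\<integral>\<^sup>+x. G (sv_output n c \<epsilon>3 a m x) \<partial>sv_noise n b2 b3) \<le>
    ennreal (exp (\<epsilon>2 + \<epsilon>3)) * (\<integral>\<^sup>+x. G (sv_output n c \<epsilon>3 a' m' x) \<partial>sv_noise n b2 b3)"
proof -
  \<comment> \<open>Each positive answer costs \<open>\<epsilon>2/c\<close> for its test and \<open>\<epsilon>3/c\<close> for its released value.\<close>
  define l2 where "l2 = \<epsilon>2 / real c"
  define l3 where "l3 = (if \<epsilon>3 > 0 then \<epsilon>3 / real c else 0)"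
  have c: "real c > 0"
    using \<open>c \<ge> 1\<close> by simp
  have scales: "b2 > 0" "b3 > 0" "0 \<le> l3" "l2 * b2 = \<Delta>" "\<epsilon>3 > 0 \<Longrightarrow> l3 * b3 = \<Delta>"
    using assms(1-3) c by (auto simp: l2_def l3_def b2 b3)
  have total: "(l2 + l3) * real c = \<epsilon>2 + \<epsilon>3"
    using assms(3) c by (auto simp: l2_def l3_def distrib_right)
  have "(\<integral>\<^sup>+x. G (sv_output n c \<epsilon>3 a m x) \<partial>sv_noise n b2 b3) \<le>
      (\<integral>\<^sup>+x. G (sv_output n c \<epsilon>3 a' m' x) *
         ennreal (exp ((l2 + l3) * real (count_positive n (sv_output n c \<epsilon>3 a' m' x)))) \<partial>sv_noise n b2 b3)"
    using scales thresholds answers by (intro sv_output_coupling G) auto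
  also have "\<dots> \<le> (\<integral>\<^sup>+x. ennreal (exp (\<epsilon>2 + \<epsilon>3)) * G (sv_output n c \<epsilon>3 a' m' x) \<partial>sv_noise n b2 b3)"
  proof (intro nn_integral_mono)
    fix x
    have "(l2 + l3) * real (count_positive n (sv_output n c \<epsilon>3 a' m' x)) \<le> (l2 + l3) * real c"
      using count_positive_sv_output_le scales assms(2) c by (intro mult_left_mono) (auto simp: l2_def)
    then have weight_le: "ennreal (exp ((l2 + l3) * real (count_positive n (sv_output n c \<epsilon>3 a' m' x)))) \<le>
        ennreal (exp (\<epsilon>2 + \<epsilon>3))"
      using total by (intro ennreal_leI) simp
    show "G (sv_output n c \<epsilon>3 a' m' x) *
        ennreal (exp ((l2 + l3) * real (count_positive n (sv_output n c \<epsilon>3 a' m' x)))) \<le>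
        ennreal (exp (\<epsilon>2 + \<epsilon>3)) * G (sv_output n c \<epsilon>3 a' m' x)"
      using mult_left_mono[OF weight_le, of "G (sv_output n c \<epsilon>3 a' m' x)"] by (simp add: mult.commute)
  qed
  also have "\<dots> = ennreal (exp (\<epsilon>2 + \<epsilon>3)) * (\<integral>\<^sup>+x. G (sv_output n c \<epsilon>3 a' m' x) \<partial>sv_noise n b2 b3)"
    using measurable_compose[OF measurable_sv_output G] by (rule nn_integral_cmult)
  finally show ?thesis .
qed

section \<open>The modified sparse vector technique\<close>

lemma svt_output_eq_sv_output:
  "svt_output n c e q T D (\<rho>, x) = sv_output n c e (\<lambda>i. T i + \<rho> - q i D) (\<lambda>i. q i D) x"
proof -
  have "{j. j < i \<and> svt_test q T D \<rho> (fst x) j} = {j. j < i \<and> T j + \<rho> - q j D \<le> fst x j}" for i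
    by (auto simp: svt_test_def)
  then show ?thesis
    by (cases x) (auto simp: svt_output_def sv_output_def sv_slot_def svt_test_def)
qed

lemma measurable_svt_output:
  assumes "sets M = sets borel"
  shows "svt_output n c e q T D \<in> measurable (M \<Otimes>\<^sub>M sv_noise n b2 b3) (svt_out_space n)"
proof -
  have [measurable]: "fst \<in> borel_measurable (M \<Otimes>\<^sub>M sv_noise n b2 b3)"
    using measurable_fst[of M "sv_noise n b2 b3"] unfolding measurable_cong_sets[OF refl assms] .
  have "svt_output n c e q T D = (\<lambda>z. sv_output n c e (\<lambda>i. T i + fst z - q i D) (\<lambda>i. q i D) (snd z))"
    by (simp add: fun_eq_iff split_paired_all svt_output_eq_sv_output)
  also have "\<dots> \<in> measurable (M \<Otimes>\<^sub>M sv_noise n b2 b3) (svt_out_space n)"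
    by (rule measurable_sv_output_param) measurable
  finally show ?thesis .
qed

lemma emeasure_svt_output_distr:
  assumes "b1 > 0" "b2 > 0" "b3 > 0" and S: "S \<in> sets (svt_out_space n)"
  shows "emeasure (distr (Lap b1 \<Otimes>\<^sub>M sv_noise n b2 b3) (svt_out_space n) (svt_output n c e q T D)) S =
    (\<integral>\<^sup>+\<rho>. \<integral>\<^sup>+x. indicator S (sv_output n c e (\<lambda>i. T i + \<rho> - q i D) (\<lambda>i. q i D) x) \<partial>sv_noise n b2 b3
       \<partial>Lap b1)"
proof -
  interpret N: prob_space "sv_noise n b2 b3"
    by (intro prob_space_pair prob_space_PiM prob_space_Lap assms(2,3))
  have out[measurable]: "svt_output n c e q T D \<in> measurable (Lap b1 \<Otimes>\<^sub>M sv_noise n b2 b3) (svt_out_space n)"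
    by (rule measurable_svt_output) simp
  have "emeasure (distr (Lap b1 \<Otimes>\<^sub>M sv_noise n b2 b3) (svt_out_space n) (svt_output n c e q T D)) S =
      (\<integral>\<^sup>+y. indicator S y \<partial>distr (Lap b1 \<Otimes>\<^sub>M sv_noise n b2 b3) (svt_out_space n) (svt_output n c e q T D))"
    using S by (intro nn_integral_indicator[symmetric]) simp
  also have "\<dots> = (\<integral>\<^sup>+z. indicator S (svt_output n c e q T D z) \<partial>(Lap b1 \<Otimes>\<^sub>M sv_noise n b2 b3))"
    using S by (intro nn_integral_distr out) simp
  also have "\<dots> = (\<integral>\<^sup>+\<rho>. \<integral>\<^sup>+x. indicator S (svt_output n c e q T D (\<rho>, x)) \<partial>sv_noise n b2 b3 \<partial>Lap b1)"
    using measurable_compose[OF out borel_measurable_indicator[OF S]] by (rule N.nn_integral_fst[symmetric])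
  finally show ?thesis
    by (simp add: svt_output_eq_sv_output)
qed

lemma measurable_sv_output_prob:
  fixes q :: "nat \<Rightarrow> 'a multiset \<Rightarrow> real"
  assumes "b2 > 0" "b3 > 0" and S: "S \<in> sets (svt_out_space n)"
  shows "(\<lambda>\<rho>. \<integral>\<^sup>+x. indicator S (sv_output n c e (\<lambda>i. T i + \<rho> - q i D) (\<lambda>i. q i D) x) \<partial>sv_noise n b2 b3)
    \<in> borel_measurable borel"
proof -
  interpret N: prob_space "sv_noise n b2 b3"
    by (intro prob_space_pair prob_space_PiM prob_space_Lap assms(1,2))
  have [measurable]: "svt_output n c e q T D \<in> measurable (borel \<Otimes>\<^sub>M sv_noise n b2 b3) (svt_out_space n)"
    by (rule measurable_svt_output) simp
  have "(\<lambda>\<rho>. \<integral>\<^sup>+x. indicator S (svt_output n c e q T D (\<rho>, x)) \<partial>sv_noise n b2 b3) \<in> borel_measurable borel"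
    using S by measurable
  then show ?thesis
    by (simp add: svt_output_eq_sv_output)
qed

lemma prob_space_svt_mod:
  assumes "\<epsilon>1 > 0" "\<epsilon>2 > 0" "\<epsilon>3 \<ge> 0" "\<Delta> > 0" "c \<ge> 1"
  shows "prob_space (svt_mod n c \<Delta> \<epsilon>1 \<epsilon>2 \<epsilon>3 q T D)"
proof -
  have "prob_space (svt_noise n c \<Delta> \<epsilon>1 \<epsilon>2 \<epsilon>3)"
    unfolding svt_noise_def using assms by (intro prob_space_pair prob_space_PiM prob_space_Lap) auto
  moreover have "svt_output n c \<epsilon>3 q T D \<in> measurable (svt_noise n c \<Delta> \<epsilon>1 \<epsilon>2 \<epsilon>3) (svt_out_space n)"
    unfolding svt_noise_def by (rule measurable_svt_output) simp
  ultimately show ?thesis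
    unfolding svt_mod_def by (rule prob_space.prob_space_distr)
qed

text \<open>The shift \<open>s\<close> of the threshold noise is \<open>0\<close> if the queries decrease from \<open>D\<close> to \<open>D'\<close>
and \<open>\<Delta>\<close> if they increase.\<close>
lemma monotonic_queries_shift:
  assumes "\<forall>i<n. sensitivity_le (q i) \<Delta>" "monotonic_queries n q" "neighbors D D'" "0 \<le> \<Delta>"
  obtains s where "\<bar>s\<bar> \<le> \<Delta>" "\<forall>i<n. 0 \<le> s + q i D - q i D' \<and> s + q i D - q i D' \<le> \<Delta>"
proof -
  have sens: "\<bar>q i D - q i D'\<bar> \<le> \<Delta>" if "i < n" for i
    using assms(1,3) that by (auto simp: sensitivity_le_def)
  show ?thesis
  proof (cases "\<forall>i<n. q i D \<ge> q i D'")
    case True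
    then show ?thesis
      using assms(4) by (intro that[of 0]) (auto simp: abs_le_iff dest: sens)
  next
    case False
    then have "\<forall>i<n. q i D \<le> q i D'"
      using assms(2,3) by (auto simp: monotonic_queries_def)
    then show ?thesis
      using assms(4) by (intro that[of \<Delta>]) (auto simp: abs_le_iff dest: sens)
  qed
qed

lemma emeasure_svt_mod_le:
  assumes "\<epsilon>1 > 0" and "\<epsilon>2 > 0" and "\<epsilon>3 \<ge> 0" and "\<Delta> > 0" and "c \<ge> 1"
    and "\<forall>i<n. sensitivity_le (q i) \<Delta>"
    and "monotonic_queries n q"
    and "neighbors D D'"
    and S: "S \<in> sets (svt_out_space n)"
  shows "emeasure (svt_mod n c \<Delta> \<epsilon>1 \<epsilon>2 \<epsilon>3 q T D) S
         \<le> ennreal (exp (\<epsilon>1 + \<epsilon>2 + \<epsilon>3)) * emeasure (svt_mod n c \<Delta> \<epsilon>1 \<epsilon>2 \<epsilon>3 q T D') S"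
proof -
  define b1 where "b1 = \<Delta> / \<epsilon>1"
  define b2 where "b2 = real c * \<Delta> / \<epsilon>2"
  define b3 where "b3 = (if \<epsilon>3 > 0 then real c * \<Delta> / \<epsilon>3 else 1)"
  have b: "b1 > 0" "b2 > 0" "b3 > 0"
    using assms(1-5) by (auto simp: b1_def b2_def b3_def)
  let ?P = "\<lambda>D \<rho>. \<integral>\<^sup>+x. indicator S (sv_output n c \<epsilon>3 (\<lambda>i. T i + \<rho> - q i D) (\<lambda>i. q i D) x) \<partial>sv_noise n b2 b3"
  have emeasure_eq: "emeasure (svt_mod n c \<Delta> \<epsilon>1 \<epsilon>2 \<epsilon>3 q T Dx) S = (\<integral>\<^sup>+\<rho>. ?P Dx \<rho> \<partial>Lap b1)" for Dx
    unfolding svt_mod_def svt_noise_def b1_def[symmetric] b2_def[symmetric] b3_def[symmetric]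
    using b S by (rule emeasure_svt_output_distr)
  have sens: "\<bar>q i D - q i D'\<bar> \<le> \<Delta>" if "i < n" for i
    using assms(6,8) that by (auto simp: sensitivity_le_def)
  have "0 \<le> \<Delta>"
    using assms(4) by simp
  then obtain s where s: "\<bar>s\<bar> \<le> \<Delta>" and shift: "\<forall>i<n. 0 \<le> s + q i D - q i D' \<and> s + q i D - q i D' \<le> \<Delta>"
    by (rule monotonic_queries_shift[OF assms(6-8)])
  have "?P D \<rho> \<le> ennreal (exp (\<epsilon>2 + \<epsilon>3)) * ?P D' (\<rho> + s)" for \<rho>
    using shift sens S by (intro nn_integral_sv_output_threshold_shift[OF assms(4,2,3,5) b2_def b3_def]) auto
  then have "(\<integral>\<^sup>+\<rho>. ?P D \<rho> \<partial>Lap b1) \<le>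
      ennreal (exp (\<epsilon>2 + \<epsilon>3)) * ennreal (exp (\<bar>s\<bar> / b1)) * (\<integral>\<^sup>+\<rho>. ?P D' \<rho> \<partial>Lap b1)"
    using b S by (intro nn_integral_Lap_le_shifted measurable_sv_output_prob) auto
  also have "\<dots> \<le> ennreal (exp (\<epsilon>1 + \<epsilon>2 + \<epsilon>3)) * (\<integral>\<^sup>+\<rho>. ?P D' \<rho> \<partial>Lap b1)"
  proof (intro mult_right_mono)
    have "\<bar>s\<bar> / b1 \<le> \<epsilon>1"
      using s assms(1,4) by (simp add: b1_def field_simps)
    then have "ennreal (exp (\<epsilon>2 + \<epsilon>3) * exp (\<bar>s\<bar> / b1)) \<le> ennreal (exp (\<epsilon>1 + \<epsilon>2 + \<epsilon>3))"
      by (intro ennreal_leI) (simp add: exp_add[symmetric])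
    then show "ennreal (exp (\<epsilon>2 + \<epsilon>3)) * ennreal (exp (\<bar>s\<bar> / b1)) \<le> ennreal (exp (\<epsilon>1 + \<epsilon>2 + \<epsilon>3))"
      by (simp add: ennreal_mult)
  qed simp
  finally show ?thesis
    unfolding emeasure_eq .
qed

theorem theorem4:
  fixes n c :: nat and \<Delta> \<epsilon>1 \<epsilon>2 \<epsilon>3 :: real
    and q :: "nat \<Rightarrow> 'a multiset \<Rightarrow> real" and T :: "nat \<Rightarrow> real"
  assumes "\<epsilon>1 > 0" and "\<epsilon>2 > 0" and "\<epsilon>3 \<ge> 0" and "\<Delta> > 0" and "c \<ge> 1"
    and "\<forall>i<n. sensitivity_le (q i) \<Delta>"
    and "monotonic_queries n q"
    and "neighbors D D'"
    and "S \<in> sets (svt_out_space n)"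
  shows "measure (svt_mod n c \<Delta> \<epsilon>1 \<epsilon>2 \<epsilon>3 q T D) S
         \<le> exp (\<epsilon>1 + \<epsilon>2 + \<epsilon>3) * measure (svt_mod n c \<Delta> \<epsilon>1 \<epsilon>2 \<epsilon>3 q T D') S"
proof -
  interpret M: prob_space "svt_mod n c \<Delta> \<epsilon>1 \<epsilon>2 \<epsilon>3 q T D"
    using assms(1-5) by (rule prob_space_svt_mod)
  interpret M': prob_space "svt_mod n c \<Delta> \<epsilon>1 \<epsilon>2 \<epsilon>3 q T D'"
    using assms(1-5) by (rule prob_space_svt_mod)
  have "ennreal (measure (svt_mod n c \<Delta> \<epsilon>1 \<epsilon>2 \<epsilon>3 q T D) S) \<le>
      ennreal (exp (\<epsilon>1 + \<epsilon>2 + \<epsilon>3) * measure (svt_mod n c \<Delta> \<epsilon>1 \<epsilon>2 \<epsilon>3 q T D') S)"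
    using emeasure_svt_mod_le[OF assms, where T = T]
    by (simp add: M.emeasure_eq_measure M'.emeasure_eq_measure ennreal_mult)
  then show ?thesis
    by (rule ennreal_le_iff[THEN iffD1, rotated]) simp
qed

end
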